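(* Suppose the total Pauli channel is a composition of independent single-Pauli channels, $$\mathcal N(\rho)=\circ_{e\in\mathcal E_\Gamma}\mathcal N^{(e)}(\rho),\qquad \mathcal N^{(e)}(\rho)=(1-p_e)\rho+p_e\,e\rho e^\dagger,$$ with $0<p_e<1/2$. Then for every nontrivial syndrome class $C$, the detector error rate $P^{\mathrm{detect}}_C$, i.e. the probability that an odd number of the errors in $C$ occur, can be learned exactly from the syndrome expectation values $\Lambda(M)$, $M\in\mathcal M$.
   Context: $\mathcal P_n$ is the $n$-qubit Pauli group without phases; $[[A,B]]=\pm1$ according to commutation, $\langle A,B\rangle\in\{0,1\}$ is $0$ iff they commute. $\mathcal E_\Gamma$ is a finite list of non-identity Pauli errors (the same operator may appear several times as distinct elements). A stabilizer code has measured stabilizer subgroup $\mathcal M$; codewords are prepared, the channel applied and $\mathcal M$'s generators measured perfectly, giving syndrome expectation values $\Lambda(M)=\sum_eP(e)[[e,M]]$ where $P$ is the total error distribution. Syndrome classes partition $\mathcal E_\Gamma$ by equality of $(\langle e,M\rangle)_{M\in\mathcal M}$; a class is nontrivial if its syndrome is nonzero. "Learned exactly" means uniquely determined by the values $(\Lambda(M))_{M\in\mathcal M}$ among all channels of the stated form. *)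

theory Defs
  imports Complex_Main
begin

text \<open>An n-qubit Pauli operator without phase, in symplectic form: qubit i carries
  (x_i, z_i); X = (True,False), Z = (False,True), Y = (True,True), I = (False,False).\<close>
type_synonym pauli = "nat \<Rightarrow> bool \<times> bool"

definition paulis :: "nat \<Rightarrow> pauli set" where
  "paulis n = {P. \<forall>i\<ge>n. P i = (False, False)}"

definition pid :: pauli where
  "pid = (\<lambda>i. (False, False))"

definition pmult :: "pauli \<Rightarrow> pauli \<Rightarrow> pauli" where
  "pmult P Q = (\<lambda>i. (fst (P i) \<noteq> fst (Q i), snd (P i) \<noteq> snd (Q i)))"

text \<open>Symplectic form: 0 iff A and B commute, 1 otherwise.\<close>
definition symp_form :: "nat \<Rightarrow> pauli \<Rightarrow> pauli \<Rightarrow> nat" where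
  "symp_form n A B = (card {i. i < n \<and> fst (A i) \<and> snd (B i)}
                + card {i. i < n \<and> snd (A i) \<and> fst (B i)}) mod 2"

definition comm_sign :: "nat \<Rightarrow> pauli \<Rightarrow> pauli \<Rightarrow> real" where
  "comm_sign n A B = (if symp_form n A B = 0 then 1 else -1)"

definition stabilizer_group :: "nat \<Rightarrow> pauli set \<Rightarrow> bool" where
  "stabilizer_group n MM \<longleftrightarrow> MM \<subseteq> paulis n \<and> pid \<in> MM
     \<and> (\<forall>A\<in>MM. \<forall>B\<in>MM. pmult A B \<in> MM)
     \<and> (\<forall>A\<in>MM. \<forall>B\<in>MM. symp_form n A B = 0)"

definition prod_errs :: "pauli list \<Rightarrow> nat set \<Rightarrow> pauli" where
  "prod_errs E S = foldr pmult (map (\<lambda>j. E ! j) (filter (\<lambda>j. j \<in> S) [0..<length E])) pid"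

definition occur_prob :: "(nat \<Rightarrow> real) \<Rightarrow> nat \<Rightarrow> nat set \<Rightarrow> real" where
  "occur_prob p m S = (\<Prod>j\<in>S. p j) * (\<Prod>j\<in>{0..<m} - S. 1 - p j)"

definition total_dist :: "pauli list \<Rightarrow> (nat \<Rightarrow> real) \<Rightarrow> pauli \<Rightarrow> real" where
  "total_dist E p e = (\<Sum>S\<in>Pow {0..<length E}.
       if prod_errs E S = e then occur_prob p (length E) S else 0)"

definition syndrome_exp :: "nat \<Rightarrow> pauli list \<Rightarrow> (nat \<Rightarrow> real) \<Rightarrow> pauli \<Rightarrow> real" where
  "syndrome_exp n E p M = (\<Sum>e\<in>paulis n. total_dist E p e * comm_sign n e M)"

definition syndrome :: "nat \<Rightarrow> pauli set \<Rightarrow> pauli \<Rightarrow> pauli \<Rightarrow> nat" where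
  "syndrome n MM e = (\<lambda>M. if M \<in> MM then symp_form n e M else 0)"

definition syndrome_class :: "nat \<Rightarrow> pauli set \<Rightarrow> pauli list \<Rightarrow> nat \<Rightarrow> nat set" where
  "syndrome_class n MM E i = {j. j < length E \<and> syndrome n MM (E ! j) = syndrome n MM (E ! i)}"

definition detect_rate :: "pauli list \<Rightarrow> (nat \<Rightarrow> real) \<Rightarrow> nat set \<Rightarrow> real" where
  "detect_rate E p C = (\<Sum>S\<in>Pow {0..<length E}.
       if odd (card (S \<inter> C)) then occur_prob p (length E) S else 0)"

definition valid_rates :: "pauli list \<Rightarrow> (nat \<Rightarrow> real) \<Rightarrow> bool" where
  "valid_rates E p \<longleftrightarrow> (\<forall>j<length E. 0 < p j \<and> p j < 1/2)"

end

theory Submission imports Defs begin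

(* Each single-Pauli channel multiplies the expectation of a stabilizer M by 1 - 2 p(e)
   if e anticommutes with M and leaves it unchanged otherwise, so
   ln Lambda(M) = sum_e <e,M> ln (1 - 2 p(e)).  Pairing these logarithms with the character
   M |-> [[e_i,M]] of the group of stabilizers annihilates every error whose syndrome differs
   from that of e_i and recovers the sum of ln (1 - 2 p(e)) over the class C of e_i.
   The detector error rate of C is (1 - prod_{e in C} (1 - 2 p(e))) / 2. *)

lemma prod_sign_eq_power_card:
  assumes "finite A"
  shows "(\<Prod>x\<in>A. if P x then -1 else (1::real)) = (-1) ^ card {x\<in>A. P x}"
proof -
  have "(\<Prod>x\<in>A. if P x then -1 else (1::real))
      = (\<Prod>x\<in>A \<inter> {x. P x}. -1) * (\<Prod>x\<in>A \<inter> - {x. P x}. 1)"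
    using prod.If_cases[OF assms] .
  then show ?thesis by (simp add: Int_def)
qed

definition qubit_sign :: "bool \<times> bool \<Rightarrow> bool \<times> bool \<Rightarrow> real" where
  "qubit_sign a b = (if fst a \<and> snd b then -1 else 1) * (if snd a \<and> fst b then -1 else 1)"

lemma comm_sign_eq_prod_qubit_sign: "comm_sign n A B = (\<Prod>i<n. qubit_sign (A i) (B i))"
proof -
  have "(\<Prod>i<n. qubit_sign (A i) (B i))
      = (\<Prod>i<n. if fst (A i) \<and> snd (B i) then -1 else (1::real)) *
        (\<Prod>i<n. if snd (A i) \<and> fst (B i) then -1 else (1::real))"
    unfolding qubit_sign_def by (rule prod.distrib)
  also have "\<dots> = (-1) ^ (card {i. i < n \<and> fst (A i) \<and> snd (B i)}
                         + card {i. i < n \<and> snd (A i) \<and> fst (B i)})"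
    by (simp add: prod_sign_eq_power_card power_add)
  also have "\<dots> = comm_sign n A B"
    unfolding comm_sign_def symp_form_def by (simp add: minus_one_power_iff even_iff_mod_2_eq_zero)
  finally show ?thesis by simp
qed

lemma comm_sign_pmult_left: "comm_sign n (pmult A A') B = comm_sign n A B * comm_sign n A' B"
  unfolding comm_sign_eq_prod_qubit_sign prod.distrib[symmetric]
  by (rule prod.cong) (auto simp: qubit_sign_def pmult_def)

lemma comm_sign_pmult_right: "comm_sign n B (pmult A A') = comm_sign n B A * comm_sign n B A'"
  unfolding comm_sign_eq_prod_qubit_sign prod.distrib[symmetric]
  by (rule prod.cong) (auto simp: qubit_sign_def pmult_def)

lemma comm_sign_pid_left [simp]: "comm_sign n pid B = 1"
  unfolding comm_sign_eq_prod_qubit_sign by (simp add: qubit_sign_def pid_def)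

lemma comm_sign_cases: "comm_sign n A B = 1 \<or> comm_sign n A B = -1"
  by (simp add: comm_sign_def)

lemma symp_form_eq_comm_sign: "real (symp_form n A B) = (1 - comm_sign n A B) / 2"
proof -
  have "symp_form n A B < 2" unfolding symp_form_def by simp
  then show ?thesis unfolding comm_sign_def by (cases "symp_form n A B") auto
qed

lemma comm_sign_eq_iff_symp_form_eq:
  "comm_sign n A M = comm_sign n B M \<longleftrightarrow> symp_form n A M = symp_form n B M"
proof -
  have "symp_form n X M < 2" for X unfolding symp_form_def by simp
  then show ?thesis unfolding comm_sign_def by (smt (verit) less_2_cases)
qed

lemma finite_paulis: "finite (paulis n)"
proof (rule finite_imageD)
  have "(\<lambda>P. map P [0..<n]) ` paulis n \<subseteq> {xs. set xs \<subseteq> UNIV \<and> length xs = n}" by auto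
  then show "finite ((\<lambda>P. map P [0..<n]) ` paulis n)"
    by (rule finite_subset) (rule finite_lists_length_eq, simp)
  show "inj_on (\<lambda>P. map P [0..<n]) (paulis n)"
  proof (rule inj_onI, rule ext)
    fix P Q i
    assume "P \<in> paulis n" "Q \<in> paulis n" and same_prefix: "map P [0..<n] = map Q [0..<n]"
    show "P i = Q i"
    proof (cases "i < n")
      case True
      then show ?thesis using arg_cong[OF same_prefix, of "\<lambda>xs. xs ! i"] by simp
    next
      case False
      then show ?thesis using \<open>P \<in> paulis n\<close> \<open>Q \<in> paulis n\<close> by (simp add: paulis_def)
    qed
  qed
qed

lemma pmult_paulis: "A \<in> paulis n \<Longrightarrow> B \<in> paulis n \<Longrightarrow> pmult A B \<in> paulis n"
  unfolding paulis_def pmult_def by auto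

lemma pid_paulis: "pid \<in> paulis n"
  unfolding paulis_def pid_def by auto

lemma stabilizer_group_card_pos: "stabilizer_group n MM \<Longrightarrow> card MM > 0"
  unfolding stabilizer_group_def
  using finite_subset[OF _ finite_paulis] card_gt_0_iff by blast

lemma prod_errs_paulis: "\<forall>e\<in>set E. e \<in> paulis n \<Longrightarrow> prod_errs E S \<in> paulis n"
proof -
  have "\<forall>j\<in>set js. E ! j \<in> paulis n \<Longrightarrow> foldr pmult (map (\<lambda>j. E ! j) js) pid \<in> paulis n" for js
    by (induction js) (auto simp: pmult_paulis pid_paulis)
  then show "\<forall>e\<in>set E. e \<in> paulis n \<Longrightarrow> prod_errs E S \<in> paulis n"
    unfolding prod_errs_def by auto
qed

lemma comm_sign_prod_errs:
  assumes "S \<subseteq> {0..<length E}"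
  shows "comm_sign n (prod_errs E S) M = (\<Prod>j\<in>S. comm_sign n (E ! j) M)"
proof -
  let ?js = "filter (\<lambda>j. j \<in> S) [0..<length E]"
  have "comm_sign n (foldr pmult (map (\<lambda>j. E ! j) js) pid) M
      = prod_list (map (\<lambda>j. comm_sign n (E ! j) M) js)" for js
    by (induction js) (auto simp: comm_sign_pmult_left)
  then have "comm_sign n (prod_errs E S) M = prod_list (map (\<lambda>j. comm_sign n (E ! j) M) ?js)"
    unfolding prod_errs_def .
  also have "\<dots> = (\<Prod>j\<in>set ?js. comm_sign n (E ! j) M)"
    by (rule prod.distinct_set_conv_list[symmetric]) simp
  also have "set ?js = S" using assms by auto
  finally show ?thesis .
qed

lemma syndrome_exp_eq_prod:
  assumes "\<forall>e\<in>set E. e \<in> paulis n"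
  shows "syndrome_exp n E p M = (\<Prod>j\<in>{0..<length E}. p j * comm_sign n (E ! j) M + (1 - p j))"
proof -
  let ?A = "{0..<length E}"
  let ?P = "\<lambda>S. occur_prob p (length E) S * comm_sign n (prod_errs E S) M"
  have "syndrome_exp n E p M = (\<Sum>e\<in>paulis n. \<Sum>S\<in>Pow ?A. if prod_errs E S = e then ?P S else 0)"
    unfolding syndrome_exp_def total_dist_def sum_distrib_right
    by (intro sum.cong refl) simp
  also have "\<dots> = (\<Sum>S\<in>Pow ?A. \<Sum>e\<in>paulis n. if prod_errs E S = e then ?P S else 0)"
    by (rule sum.swap)
  also have "\<dots> = (\<Sum>S\<in>Pow ?A. ?P S)"
    using prod_errs_paulis[OF assms] finite_paulis by (intro sum.cong refl) (simp add: sum.delta)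
  also have "\<dots> = (\<Sum>S\<in>Pow ?A. (\<Prod>j\<in>S. p j * comm_sign n (E ! j) M) * (\<Prod>j\<in>?A - S. 1 - p j))"
    unfolding occur_prob_def
    by (intro sum.cong refl) (simp add: comm_sign_prod_errs prod.distrib)
  also have "\<dots> = (\<Prod>j\<in>?A. p j * comm_sign n (E ! j) M + (1 - p j))"
    by (rule prod_add[symmetric]) simp
  finally show ?thesis .
qed

lemma ln_syndrome_exp:
  assumes "\<forall>e\<in>set E. e \<in> paulis n" and "\<And>j. j < length E \<Longrightarrow> p j < 1/2"
  shows "ln (syndrome_exp n E p M)
       = (\<Sum>j\<in>{0..<length E}. real (symp_form n (E ! j) M) * ln (1 - 2 * p j))"
proof -
  have "syndrome_exp n E p M
      = (\<Prod>j\<in>{0..<length E}. exp (real (symp_form n (E ! j) M) * ln (1 - 2 * p j)))"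
    unfolding syndrome_exp_eq_prod[OF assms(1)]
  proof (intro prod.cong refl)
    fix j assume "j \<in> {0..<length E}"
    then have "1 - 2 * p j > 0" using assms(2)[of j] by simp
    then show "p j * comm_sign n (E ! j) M + (1 - p j)
             = exp (real (symp_form n (E ! j) M) * ln (1 - 2 * p j))"
      using comm_sign_cases[of n "E ! j" M] symp_form_eq_comm_sign[of n "E ! j" M] by auto
  qed
  then show ?thesis by (simp add: exp_sum[symmetric])
qed

lemma sum_comm_sign_eq_0:
  assumes closed: "\<forall>A\<in>MM. \<forall>B\<in>MM. pmult A B \<in> MM"
    and "M\<^sub>0 \<in> MM" and "symp_form n Q M\<^sub>0 \<noteq> 0"
  shows "(\<Sum>M\<in>MM. comm_sign n Q M) = 0"
proof -
  have "pmult M\<^sub>0 (pmult M\<^sub>0 M) = M" for M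
    unfolding pmult_def by (auto simp: fun_eq_iff prod_eq_iff)
  then have "bij_betw (pmult M\<^sub>0) MM MM"
    using closed \<open>M\<^sub>0 \<in> MM\<close> by (intro bij_betw_byWitness[where f'="pmult M\<^sub>0"]) auto
  then have "(\<Sum>M\<in>MM. comm_sign n Q M) = (\<Sum>M\<in>MM. comm_sign n Q (pmult M\<^sub>0 M))"
    by (simp add: sum.reindex_bij_betw)
  also have "\<dots> = - (\<Sum>M\<in>MM. comm_sign n Q M)"
    using assms(3) by (simp add: comm_sign_pmult_right sum_negf comm_sign_def[of n Q M\<^sub>0])
  finally show ?thesis by simp
qed

lemma sum_comm_sign_mult_symp_form:
  assumes "stabilizer_group n MM" and "\<exists>M\<in>MM. symp_form n Q M \<noteq> 0"
  shows "(\<Sum>M\<in>MM. comm_sign n Q M * real (symp_form n P M))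
       = (if syndrome n MM P = syndrome n MM Q then - real (card MM) / 2 else 0)"
proof -
  have closed: "\<forall>A\<in>MM. \<forall>B\<in>MM. pmult A B \<in> MM"
    using assms(1) unfolding stabilizer_group_def by blast
  have "(\<Sum>M\<in>MM. comm_sign n Q M * real (symp_form n P M))
      = ((\<Sum>M\<in>MM. comm_sign n Q M) - (\<Sum>M\<in>MM. comm_sign n (pmult Q P) M)) / 2"
    by (simp add: symp_form_eq_comm_sign comm_sign_pmult_left sum_divide_distrib[symmetric]
        sum_subtractf[symmetric] right_diff_distrib)
  also have "(\<Sum>M\<in>MM. comm_sign n Q M) = 0"
    using assms(2) sum_comm_sign_eq_0[OF closed] by blast
  also have "(\<Sum>M\<in>MM. comm_sign n (pmult Q P) M)
      = (if syndrome n MM P = syndrome n MM Q then real (card MM) else 0)"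
  proof (cases "syndrome n MM P = syndrome n MM Q")
    case True
    have "comm_sign n P M = comm_sign n Q M" if "M \<in> MM" for M
      using fun_cong[OF True, of M] that
      unfolding syndrome_def comm_sign_eq_iff_symp_form_eq by simp
    then have "comm_sign n (pmult Q P) M = 1" if "M \<in> MM" for M
      using that comm_sign_cases[of n Q M] by (auto simp: comm_sign_pmult_left)
    then show ?thesis using True by simp
  next
    case False
    then obtain M\<^sub>0 where "M\<^sub>0 \<in> MM" and "symp_form n P M\<^sub>0 \<noteq> symp_form n Q M\<^sub>0"
      unfolding syndrome_def by (metis ext)
    then have "comm_sign n (pmult Q P) M\<^sub>0 = -1"
      using comm_sign_cases[of n Q M\<^sub>0] comm_sign_cases[of n P M\<^sub>0]
      by (auto simp: comm_sign_pmult_left comm_sign_eq_iff_symp_form_eq[symmetric])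
    then have "symp_form n (pmult Q P) M\<^sub>0 \<noteq> 0" by (simp add: comm_sign_def split: if_splits)
    then show ?thesis using False sum_comm_sign_eq_0[OF closed \<open>M\<^sub>0 \<in> MM\<close>] by simp
  qed
  finally show ?thesis by simp
qed

lemma sum_syndrome_class_eq_transform:
  assumes "stabilizer_group n MM" and "\<exists>M\<in>MM. symp_form n (E ! i) M \<noteq> 0"
  shows "(\<Sum>j\<in>syndrome_class n MM E i. a j)
       = - 2 / real (card MM) *
         (\<Sum>M\<in>MM. comm_sign n (E ! i) M * (\<Sum>j\<in>{0..<length E}. real (symp_form n (E ! j) M) * a j))"
proof -
  let ?c = "- real (card MM) / 2"
  have "(\<Sum>M\<in>MM. comm_sign n (E ! i) M * (\<Sum>j\<in>{0..<length E}. real (symp_form n (E ! j) M) * a j))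
      = (\<Sum>j\<in>{0..<length E}. a j * (\<Sum>M\<in>MM. comm_sign n (E ! i) M * real (symp_form n (E ! j) M)))"
    unfolding sum_distrib_left by (subst sum.swap) (simp add: algebra_simps)
  also have "\<dots> = (\<Sum>j\<in>{0..<length E}.
                     if syndrome n MM (E ! j) = syndrome n MM (E ! i) then ?c * a j else 0)"
    by (intro sum.cong refl) (simp add: sum_comm_sign_mult_symp_form[OF assms])
  also have "\<dots> = ?c * (\<Sum>j\<in>syndrome_class n MM E i. a j)"
    unfolding syndrome_class_def sum_distrib_left
    by (simp add: sum.inter_filter[symmetric] Int_def conj_commute)
  finally show ?thesis
    using stabilizer_group_card_pos[OF assms(1)] by simp
qed

lemma detect_rate_eq_prod:
  assumes "C \<subseteq> {0..<length E}"
  shows "detect_rate E p C = (1 - (\<Prod>j\<in>C. 1 - 2 * p j)) / 2"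
proof -
  let ?A = "{0..<length E}"
  let ?o = "occur_prob p (length E)"
  let ?sg = "\<lambda>j. if j \<in> C then -1 else (1::real)"
  have sign: "(\<Prod>j\<in>S. ?sg j) = (-1) ^ card (S \<inter> C)" if "S \<subseteq> ?A" for S
    using prod_sign_eq_power_card[OF finite_subset[OF that]] by (simp add: Int_def)
  have "detect_rate E p C = (\<Sum>S\<in>Pow ?A. ?o S * (1 - (-1) ^ card (S \<inter> C)) / 2)"
    unfolding detect_rate_def by (intro sum.cong refl) auto
  also have "\<dots> = ((\<Sum>S\<in>Pow ?A. ?o S) - (\<Sum>S\<in>Pow ?A. ?o S * (-1) ^ card (S \<inter> C))) / 2"
    by (simp add: sum_divide_distrib[symmetric] sum_subtractf[symmetric] right_diff_distrib)
  also have "(\<Sum>S\<in>Pow ?A. ?o S) = (\<Prod>j\<in>?A. p j + (1 - p j))"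
    unfolding occur_prob_def by (rule prod_add[symmetric]) simp
  also have "(\<Sum>S\<in>Pow ?A. ?o S * (-1) ^ card (S \<inter> C))
      = (\<Sum>S\<in>Pow ?A. (\<Prod>j\<in>S. p j * ?sg j) * (\<Prod>j\<in>?A - S. 1 - p j))"
    unfolding occur_prob_def prod.distrib by (intro sum.cong refl) (simp add: sign)
  also have "\<dots> = (\<Prod>j\<in>?A. p j * ?sg j + (1 - p j))"
    by (rule prod_add[symmetric]) simp
  also have "\<dots> = (\<Prod>j\<in>?A. if j \<in> C then 1 - 2 * p j else 1)"
    by (intro prod.cong refl) auto
  also have "\<dots> = (\<Prod>j\<in>C. 1 - 2 * p j)"
    using assms by (subst prod.If_cases) (auto simp: Int_absorb1 Int_def[symmetric])
  finally show ?thesis by simp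
qed

lemma detect_rate_eq_exp_sum_ln:
  assumes "C \<subseteq> {0..<length E}" and "\<And>j. j \<in> C \<Longrightarrow> p j < 1/2"
  shows "detect_rate E p C = (1 - exp (\<Sum>j\<in>C. ln (1 - 2 * p j))) / 2"
proof -
  have "finite C" using assms(1) finite_subset by blast
  then have "exp (\<Sum>j\<in>C. ln (1 - 2 * p j)) = (\<Prod>j\<in>C. exp (ln (1 - 2 * p j)))"
    by (rule exp_sum)
  also have "\<dots> = (\<Prod>j\<in>C. 1 - 2 * p j)"
  proof (rule prod.cong[OF refl])
    fix j assume "j \<in> C"
    then have "p j < 1/2" by (rule assms(2))
    then show "exp (ln (1 - 2 * p j)) = 1 - 2 * p j" by simp
  qed
  finally show ?thesis by (simp add: detect_rate_eq_prod[OF assms(1)])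
qed

theorem lemma7:
  fixes n :: nat and MM :: "pauli set" and E :: "pauli list" and i :: nat
  assumes "stabilizer_group n MM"
    and "\<forall>e\<in>set E. e \<in> paulis n \<and> e \<noteq> pid"
    and "i < length E"
    and "\<exists>M\<in>MM. symp_form n (E ! i) M \<noteq> 0"
  shows "\<forall>p q. valid_rates E p \<longrightarrow> valid_rates E q
           \<longrightarrow> (\<forall>M\<in>MM. syndrome_exp n E p M = syndrome_exp n E q M)
           \<longrightarrow> detect_rate E p (syndrome_class n MM E i)
             = detect_rate E q (syndrome_class n MM E i)"
proof (intro allI impI)
  fix p q
  assume "valid_rates E p" "valid_rates E q"
    and same_exp: "\<forall>M\<in>MM. syndrome_exp n E p M = syndrome_exp n E q M"
  let ?C = "syndrome_class n MM E i"
  have in_paulis: "\<forall>e\<in>set E. e \<in> paulis n" using assms(2) by blast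
  have C_indices: "?C \<subseteq> {0..<length E}" unfolding syndrome_class_def by auto
  have rate_lt_half: "r j < 1/2" if "valid_rates E r" and "j \<in> ?C" for r j
    using that C_indices unfolding valid_rates_def by auto
  have detect: "detect_rate E r ?C = (1 - exp (\<Sum>j\<in>?C. ln (1 - 2 * r j))) / 2"
    if "valid_rates E r" for r
    using detect_rate_eq_exp_sum_ln[OF C_indices rate_lt_half[OF that]] .
  have log_sum: "(\<Sum>j\<in>?C. ln (1 - 2 * r j))
      = - 2 / real (card MM) * (\<Sum>M\<in>MM. comm_sign n (E ! i) M * ln (syndrome_exp n E r M))"
    if "valid_rates E r" for r
    using that unfolding sum_syndrome_class_eq_transform[OF assms(1,4)]
    by (simp add: ln_syndrome_exp[OF in_paulis] valid_rates_def)
  show "detect_rate E p ?C = detect_rate E q ?C"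
    unfolding detect[OF \<open>valid_rates E p\<close>] detect[OF \<open>valid_rates E q\<close>]
      log_sum[OF \<open>valid_rates E p\<close>] log_sum[OF \<open>valid_rates E q\<close>]
    using same_exp by simp
qed

end
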